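(* Let $M$ be an automaton with $\mathit{regular\_ta}(M)$. Then $\mathit{tau\_sim}\ M\ (\mathit{tauclose\_ta}\ M)$.
   Context: Actions are $\mathit{NoAct}$ (silent) and $\mathit{AssAct}\ x\ v$. An edge over node type $N$ is a record $(\mathit{source},\mathit{action},\mathit{dest})$ with source and destination in $N$. An automaton over $N$ is a record with a list $\mathit{nodes}$ of nodes, a list $\mathit{edges}$ of edges, and an initial node $\mathit{init\_s}$. $\mathit{regular\_ta}(M)$ means $\mathit{init\_s}(M)\in\mathit{nodes}(M)$ and every edge of $M$ has source and destination in $\mathit{nodes}(M)$. $\mathit{tauclose\_step}\ M\ s\ X = \{s\}\cup X\cup\{n\in\mathit{nodes}(M) : \exists e\in\mathit{edges}(M).\ \mathit{source}\ e\in X \wedge \mathit{action}\ e=\mathit{NoAct}\wedge \mathit{dest}\ e=n\}$; this is monotone in $X$, and $\mathit{tauclose}\ M\ s$ is its least fixed point. $\mathit{tauclose\_ta}\ M$ is the automaton over sets of nodes with: $\mathit{nodes}$ the list of $\mathit{tauclose}\ M\ n$ for $n\in\mathit{nodes}(M)$; $\mathit{init\_s}=\mathit{tauclose}\ M\ (\mathit{init\_s}\ M)$; $\mathit{edges}$ the list of those edges $(\mathit{source}=\mathit{tauclose}\ M\ n_1,\mathit{action}=a,\mathit{dest}=\mathit{tauclose}\ M\ n_2)$, where $n_1,n_2\in\mathit{nodes}(M)$ and $a$ is the action of some edge of $M$, for which there exist $s_1,s_2$ with $\mathit{tauclose}\ M\ s_1=\mathit{tauclose}\ M\ n_1$, $\mathit{tauclose}\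 M\ s_2=\mathit{tauclose}\ M\ n_2$, $a\neq\mathit{NoAct}$, and some $s\in\mathit{tauclose}\ M\ s_1$ with $(\mathit{source}=s,\mathit{action}=a,\mathit{dest}=s_2)\in\mathit{edges}(M)$. For automata $M_1,M_2$, $\mathit{tau\_sim}\ M_1\ M_2$ holds iff there is a relation $R$ between nodes of $M_1$ and nodes of $M_2$ with $R(\mathit{init\_s}\ M_1,\mathit{init\_s}\ M_2)$ such that whenever $R(s_1,s_2)$ and $(\mathit{source}=s_1,\mathit{action}=a,\mathit{dest}=s_1')\in\mathit{edges}(M_1)$, then either ($a=\mathit{NoAct}$ and $R(s_1',s_2)$) or there is $s_2'$ with $(\mathit{source}=s_2,\mathit{action}=a,\mathit{dest}=s_2')\in\mathit{edges}(M_2)$ and $R(s_1',s_2')$. *)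

theory Defs
  imports Main
begin

datatype ('x, 'v) action = NoAct | AssAct 'x 'v

record ('n, 'x, 'v) edge =
  source :: 'n
  action :: "('x, 'v) action"
  dest :: 'n

record ('n, 'x, 'v) ta =
  nodes :: "'n list"
  edges :: "('n, 'x, 'v) edge list"
  init_s :: 'n

definition regular_ta :: "('n, 'x, 'v) ta \<Rightarrow> bool" where
  "regular_ta M \<longleftrightarrow> init_s M \<in> set (nodes M) \<and>
     (\<forall>e \<in> set (edges M). source e \<in> set (nodes M) \<and> dest e \<in> set (nodes M))"

definition tauclose_step :: "('n, 'x, 'v) ta \<Rightarrow> 'n \<Rightarrow> 'n set \<Rightarrow> 'n set" where
  "tauclose_step M s X = {s} \<union> X \<union>
     {n \<in> set (nodes M). \<exists>e \<in> set (edges M). source e \<in> X \<and> action e = NoAct \<and> dest e = n}"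

lemma mono_tauclose_step: "mono (tauclose_step M s)"
  unfolding tauclose_step_def mono_def by blast

definition tauclose :: "('n, 'x, 'v) ta \<Rightarrow> 'n \<Rightarrow> 'n set" where
  "tauclose M s = lfp (tauclose_step M s)"

definition tauclose_ta :: "('n, 'x, 'v) ta \<Rightarrow> ('n set, 'x, 'v) ta" where
  "tauclose_ta M = \<lparr>
     nodes = map (tauclose M) (nodes M),
     edges = [\<lparr>source = tauclose M n1, action = a, dest = tauclose M n2\<rparr>.
               n1 \<leftarrow> nodes M, n2 \<leftarrow> nodes M, a \<leftarrow> map action (edges M),
               \<exists>s1 s2. tauclose M s1 = tauclose M n1 \<and> tauclose M s2 = tauclose M n2 \<and>
                 a \<noteq> NoAct \<and>
                 (\<exists>s \<in> tauclose M s1. \<lparr>source = s, action = a, dest = s2\<rparr> \<in> set (edges M))],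
     init_s = tauclose M (init_s M) \<rparr>"

definition tau_sim :: "('n1, 'x, 'v) ta \<Rightarrow> ('n2, 'x, 'v) ta \<Rightarrow> bool" where
  "tau_sim M1 M2 \<longleftrightarrow> (\<exists>R. R (init_s M1) (init_s M2) \<and>
     (\<forall>s1 s2 a s1'. R s1 s2 \<longrightarrow>
        \<lparr>source = s1, action = a, dest = s1'\<rparr> \<in> set (edges M1) \<longrightarrow>
        ((a = NoAct \<and> R s1' s2) \<or>
         (\<exists>s2'. \<lparr>source = s2, action = a, dest = s2'\<rparr> \<in> set (edges M2) \<and> R s1' s2'))))"

end

theory Submission
  imports Defs
begin

text \<open>A node s is related to a state T of the closed automaton when T is the \<tau>-closure of some
node and contains s. Silent moves of M stay inside T, since \<tau>-closures are closed under silent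
edges; a visible move from s \<in> T is matched by the edge of the closed automaton from T to the
\<tau>-closure of the target, which contains the target.\<close>

lemma tauclose_unfold: "tauclose_step M s (tauclose M s) = tauclose M s"
  unfolding tauclose_def by (rule lfp_fixpoint[OF mono_tauclose_step])

lemma tauclose_refl: "s \<in> tauclose M s"
  using tauclose_unfold[of M s] unfolding tauclose_step_def by blast

lemma tauclose_NoAct_closed:
  assumes "x \<in> tauclose M s" and "\<lparr>source = x, action = NoAct, dest = y\<rparr> \<in> set (edges M)"
    and "y \<in> set (nodes M)"
  shows "y \<in> tauclose M s"
proof -
  have "y \<in> tauclose_step M s (tauclose M s)"
    using assms unfolding tauclose_step_def by force
  then show ?thesis
    by (simp only: tauclose_unfold)
qed

lemma tauclose_ta_edgeI:
  assumes "n1 \<in> set (nodes M)" and "n2 \<in> set (nodes M)" and "a \<noteq> NoAct"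
    and "s \<in> tauclose M n1" and "\<lparr>source = s, action = a, dest = n2\<rparr> \<in> set (edges M)"
  shows "\<lparr>source = tauclose M n1, action = a, dest = tauclose M n2\<rparr> \<in> set (edges (tauclose_ta M))"
proof -
  obtain e where "e \<in> set (edges M)" and "a = action e"
    using assms(5) by force
  with assms show ?thesis
    unfolding tauclose_ta_def by simp blast
qed

lemma init_s_tauclose_ta: "init_s (tauclose_ta M) = tauclose M (init_s M)"
  unfolding tauclose_ta_def by simp

definition in_tauclose_of_node :: "('n, 'x, 'v) ta \<Rightarrow> 'n \<Rightarrow> 'n set \<Rightarrow> bool" where
  "in_tauclose_of_node M s T \<longleftrightarrow> s \<in> T \<and> (\<exists>n \<in> set (nodes M). T = tauclose M n)"

lemma in_tauclose_of_node_step: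
  assumes "regular_ta M" and "in_tauclose_of_node M s1 T"
    and edge: "\<lparr>source = s1, action = a, dest = s1'\<rparr> \<in> set (edges M)"
  shows "(a = NoAct \<and> in_tauclose_of_node M s1' T) \<or>
    (\<exists>T'. \<lparr>source = T, action = a, dest = T'\<rparr> \<in> set (edges (tauclose_ta M)) \<and>
      in_tauclose_of_node M s1' T')"
proof -
  obtain n where n: "n \<in> set (nodes M)" and T: "T = tauclose M n" and s1: "s1 \<in> tauclose M n"
    using assms(2) unfolding in_tauclose_of_node_def by blast
  have s1': "s1' \<in> set (nodes M)"
    using assms(1) edge unfolding regular_ta_def by (metis edge.select_convs(3))
  show ?thesis
  proof (cases "a = NoAct")
    case True
    then have "s1' \<in> T"
      unfolding T using tauclose_NoAct_closed[OF s1 _ s1'] edge by simp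
    with True n T show ?thesis
      unfolding in_tauclose_of_node_def by blast
  next
    case False
    have "\<lparr>source = T, action = a, dest = tauclose M s1'\<rparr> \<in> set (edges (tauclose_ta M))"
      unfolding T by (rule tauclose_ta_edgeI[OF n s1' False s1 edge])
    moreover have "in_tauclose_of_node M s1' (tauclose M s1')"
      unfolding in_tauclose_of_node_def using s1' by (auto intro: tauclose_refl)
    ultimately show ?thesis by blast
  qed
qed

theorem theorem2:
  fixes M :: "('n, 'x, 'v) ta"
  assumes "regular_ta M"
  shows "tau_sim M (tauclose_ta M)"
proof -
  have "init_s M \<in> set (nodes M)"
    using assms unfolding regular_ta_def by simp
  then have "in_tauclose_of_node M (init_s M) (init_s (tauclose_ta M))"
    unfolding in_tauclose_of_node_def init_s_tauclose_ta by (auto intro: tauclose_refl)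
  then show ?thesis
    unfolding tau_sim_def using in_tauclose_of_node_step[OF assms] by blast
qed

end
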